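(* Let $n\ge 1$, let $k_1,\dots,k_m$ be positive integers and let $R(t)\in\mathbb{C}[[t]]$. Then $$\psi_n\left(\frac{R(t)}{(1-t^{k_1})(1-t^{k_2})\cdots(1-t^{k_m})} \right)= \frac{\psi_n\big(R(t)\,Q_n(t^{k_1})Q_n(t^{k_2})\cdots Q_n(t^{k_m})\big)}{(1-z^{k_1})(1-z^{k_2})\cdots(1-z^{k_m})},$$ where $Q_n(t)=1+t+t^2+\cdots+t^{n-1}$.
   Context: For a positive integer $n$, $\psi_n:\mathbb{C}[[t]]\to\mathbb{C}[[z,t]]$ is the linear map (extended termwise to power series) defined by $\psi_n(t^m)=z^it^j$ where $i\ge 0$ and $0\le j<n$ are the unique integers with $m=ni-j$. Fractions $1/(1-t^k)$, $1/(1-z^k)$ are expanded as geometric power series. *)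

theory Defs
  imports "HOL-Computational_Algebra.Formal_Power_Series"
begin

text \<open>Bivariate series in C[[z,t]] are represented as \<open>complex fps fps\<close>:
  the outer variable is z, the inner (coefficient) series is in t.\<close>

text \<open>psi_n(t^m) = z^i t^j where m = n*i - j, i \<ge> 0, 0 \<le> j < n; extended termwise.\<close>
definition psi :: "nat \<Rightarrow> complex fps \<Rightarrow> complex fps fps" where
  "psi n F = Abs_fps (\<lambda>i. Abs_fps (\<lambda>j.
      if j < n \<and> j \<le> n * i then fps_nth F (n * i - j) else 0))"

text \<open>Geometric series expansion of 1/(1 - X^k), i.e. \<open>\<Sum>l. X^(k*l)\<close>.\<close>
definition geom_inv :: "nat \<Rightarrow> 'a::comm_ring_1 fps" where
  "geom_inv k = Abs_fps (\<lambda>i. if k dvd i then 1 else 0)"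

definition Q :: "nat \<Rightarrow> 'a::comm_ring_1 \<Rightarrow> 'a" where
  "Q n x = (\<Sum>l<n. x ^ l)"

end

theory Submission
  imports Defs
begin

text \<open>Multiplication by \<open>t\<^sup>n\<close> commutes with \<open>\<psi>\<^sub>n\<close>, where it becomes multiplication by \<open>z\<close>.
  Hence multiplying \<open>\<psi>\<^sub>n(G/(1 - t\<^sup>k))\<close> by \<open>1 - z\<^sup>k\<close> gives
  \<open>\<psi>\<^sub>n(G (1 - t\<^sup>n\<^sup>k)/(1 - t\<^sup>k)) = \<psi>\<^sub>n(G Q\<^sub>n(t\<^sup>k))\<close>, which settles one factor; the general case
  follows by induction on the number of factors.\<close>

lemma geom_inv_times_one_minus_X_power:
  assumes "k > 0"
  shows "geom_inv k * (1 - fps_X ^ k) = (1 :: 'a::comm_ring_1 fps)"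
proof (rule fps_ext)
  fix i
  have "fps_nth (geom_inv k * (1 - fps_X ^ k)) i
      = fps_nth (geom_inv k :: 'a fps) i - fps_nth (geom_inv k * fps_X ^ k) i"
    by (simp add: algebra_simps)
  also have "\<dots> = fps_nth (1 :: 'a fps) i"
  proof (cases "i < k")
    case True
    then have "k dvd i \<longleftrightarrow> i = 0"
      using assms by (auto dest: dvd_imp_le)
    with True show ?thesis
      by (simp add: fps_X_power_mult_right_nth geom_inv_def)
  next
    case False
    then have "k dvd i \<longleftrightarrow> k dvd (i - k)"
      by (simp add: dvd_diff_nat dvd_minus_self)
    with False assms show ?thesis
      by (simp add: fps_X_power_mult_right_nth geom_inv_def)
  qed
  finally show "fps_nth (geom_inv k * (1 - fps_X ^ k)) i = fps_nth (1 :: 'a fps) i" .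
qed

lemma Q_times_one_minus: "Q n x * (1 - x) = 1 - (x::'a::comm_ring_1) ^ n"
  unfolding Q_def by (simp add: one_diff_power_eq mult.commute)

lemma psi_diff: "psi n (A - B) = psi n A - psi n B"
  unfolding psi_def by (intro fps_ext) auto

lemma psi_mult_X_power: "psi n (F * fps_X ^ (n * k)) = psi n F * fps_X ^ k"
proof (intro fps_ext)
  fix i j
  show "fps_nth (fps_nth (psi n (F * fps_X ^ (n * k))) i) j
      = fps_nth (fps_nth (psi n F * fps_X ^ k) i) j"
  proof (cases "i < k")
    case True
    then have "j < n \<Longrightarrow> n * i - j < n * k"
      by (metis le_less_trans diff_le_self gr_implies_not0 mult_strict_left_mono not_gr0)
    with True show ?thesis
      unfolding psi_def by (auto simp: fps_X_power_mult_right_nth)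
  next
    case False
    then obtain d where i: "i = k + d"
      using le_Suc_ex not_less by blast
    have "n * (k + d) - j - n * k = n * d - j"
      by (simp add: algebra_simps)
    moreover have "j \<le> n * (k + d) \<Longrightarrow> n * (k + d) - j < n * k \<longleftrightarrow> n * d < j"
      by (simp add: algebra_simps) linarith
    moreover have "j \<le> n * d \<Longrightarrow> j \<le> n * (k + d)"
      by (simp add: algebra_simps)
    ultimately show ?thesis
      using False unfolding psi_def i
      by (auto simp only: fps_X_power_mult_right_nth fps_nth_Abs_fps) auto
  qed
qed

lemma psi_mult_geom_inv:
  assumes "k > 0"
  shows "psi n (G * geom_inv k) = psi n (G * Q n (fps_X ^ k)) * geom_inv k"
proof -
  have inv_t: "geom_inv k * (1 - fps_X ^ k) = (1 :: complex fps)"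
    and inv_z: "geom_inv k * (1 - fps_X ^ k) = (1 :: complex fps fps)"
    using geom_inv_times_one_minus_X_power[OF assms] by blast+
  have "psi n (G * geom_inv k) * (1 - fps_X ^ k)
      = psi n (G * geom_inv k * (1 - fps_X ^ (n * k)))"
    using psi_mult_X_power[of n "G * geom_inv k" k] by (simp add: psi_diff algebra_simps)
  also have "G * geom_inv k * (1 - fps_X ^ (n * k))
           = G * Q n (fps_X ^ k) * (geom_inv k * (1 - fps_X ^ k))"
    using Q_times_one_minus[of n "fps_X ^ k :: complex fps"]
    by (simp add: power_mult mult_ac)
  finally have "psi n (G * geom_inv k) * (1 - fps_X ^ k) = psi n (G * Q n (fps_X ^ k))"
    using inv_t by simp
  then have "psi n (G * geom_inv k) * (geom_inv k * (1 - fps_X ^ k))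
           = psi n (G * Q n (fps_X ^ k)) * geom_inv k"
    by (metis mult.assoc mult.commute)
  then show ?thesis
    using inv_z by simp
qed

theorem lemma4:
  fixes n :: nat and ks :: "nat list" and R :: "complex fps"
  assumes "n \<ge> 1"
    and "\<forall>k\<in>set ks. k > 0"
  shows "psi n (R * (\<Prod>k\<leftarrow>ks. geom_inv k))
       = psi n (R * (\<Prod>k\<leftarrow>ks. Q n (fps_X ^ k))) * (\<Prod>k\<leftarrow>ks. geom_inv k)"
  using assms(2)
proof (induction ks arbitrary: R)
  case Nil
  then show ?case by simp
next
  case (Cons k ks)
  let ?Qs = "\<Prod>k\<leftarrow>ks. Q n (fps_X ^ k)" and ?Gs = "\<Prod>k\<leftarrow>ks. geom_inv k"
  have "psi n (R * (\<Prod>k\<leftarrow>k # ks. geom_inv k)) = psi n (R * geom_inv k * ?Gs)"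
    by (simp add: mult.assoc)
  also have "\<dots> = psi n (R * geom_inv k * ?Qs) * ?Gs"
    using Cons.IH Cons.prems by simp
  also have "\<dots> = psi n (R * ?Qs * geom_inv k) * ?Gs"
    by (simp add: mult_ac)
  also have "\<dots> = psi n (R * ?Qs * Q n (fps_X ^ k)) * geom_inv k * ?Gs"
    using psi_mult_geom_inv Cons.prems by simp
  also have "\<dots> = psi n (R * (\<Prod>k\<leftarrow>k # ks. Q n (fps_X ^ k))) * (\<Prod>k\<leftarrow>k # ks. geom_inv k)"
    by (simp add: mult_ac)
  finally show ?case .
qed

end
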